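(* For $n\ge2$, the topological operads $\mathcal{P}_{\mathsf{CD_n}}$ and $\mathcal{P}_{\mathsf{Disc_{n-1}}}$ are homotopy equivalent.
   Context: $\mathbb{R}^{1,n-1}$ is $\mathbb{R}^n$ (coordinates $(t,x_2,\dots,x_n)$) with the standard time-oriented Lorentzian metric $\eta$ of signature $(1,n-1)$; a curve $\gamma$ is causal if $\eta(\gamma',\gamma')\le 0$ throughout, and subsets $S,T$ are causally disjoint if no causal curve joins a point of $S$ to a point of $T$. $D^m$ is the Euclidean unit disc; $\mathrm{Rect}(D^m,D^m)$ is the space (compact-open topology) of rectilinear embeddings $\vec x\mapsto r\vec x+\vec b$ ($r>0$) of $D^m$ into $D^m$. For a one-object $\mathsf{Top}$-enriched category with a symmetric, composition-stable relation $\perp$ on pairs of endomorphisms, the associated (prefactorization) operad $\mathcal{P}$ has $k$-ary operation space $\mathcal{P}(k)=\{(f_1,\dots,f_k)\in\mathrm{Hom}(\ast,\ast)^k : (f_i,f_j)\in\perp \ \forall i\ne j\}$, with composition induced by composition of maps and $\Sigma_k$ acting by permuting entries. $\mathcal{P}_{\mathsf{CD_n}}$ is the operad for $\mathrm{Hom}=\mathrm{Rect}(D^n,D^n)$ with $(f,g)\in\perp$ iff $f(D^n)$ and $g(D^n)$ are causally disjoint in $\mathbb{R}^{1,n-1}$. $\mathcal{P}_{\mathsf{Disc_{m}}}$ is the operad for $\mathrm{Hom}=\mathrm{Rect}(D^m,D^m)$ with $(f,g)\in\perp$ iff the interiors of $f(D^m)$ and $g(D^m)$ are disjoint (this is an $\mathbb{E}_m$-operad,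 the little $m$-discs operad). *)

theory Defs
  imports "HOL-Analysis.Analysis"
begin

(* Points of R^m are encoded as functions nat => real vanishing at indices >= m.
   In R^{1,n-1}, index 0 is the time coordinate t, indices 1..n-1 are x_2..x_n. *)
type_synonym point = "nat \<Rightarrow> real"

(* A rectilinear embedding  x |-> r x + b  is encoded by the pair (r, b). *)
type_synonym emb = "real \<times> point"

(* operations of arity k: k-tuples of embeddings, encoded as nat => emb,
   entries at positions >= k are fixed to the identity embedding *)
type_synonym tup = "nat \<Rightarrow> emb"

definition eucl_norm :: "nat \<Rightarrow> point \<Rightarrow> real" where
  "eucl_norm m v = sqrt (\<Sum>i<m. (v i)\<^sup>2)"

(* Rect(D^m, D^m): r > 0 and the image disc r D^m + b lies in D^m *)
definition rect :: "nat \<Rightarrow> emb set" where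
  "rect m = {(r, b). 0 < r \<and> (\<forall>i\<ge>m. b i = 0) \<and> r + eucl_norm m b \<le> 1}"

definition ecomp :: "emb \<Rightarrow> emb \<Rightarrow> emb" where
  "ecomp f g = (fst f * fst g, (\<lambda>i. fst f * snd g i + snd f i))"

definition eid :: emb where
  "eid = (1, (\<lambda>_. 0))"

definition disc_img :: "nat \<Rightarrow> emb \<Rightarrow> point set" where
  "disc_img m f = {p. (\<forall>i\<ge>m. p i = 0) \<and> eucl_norm m (\<lambda>i. p i - snd f i) \<le> fst f}"

definition disc_int :: "nat \<Rightarrow> emb \<Rightarrow> point set" where
  "disc_int m f = {p. (\<forall>i\<ge>m. p i = 0) \<and> eucl_norm m (\<lambda>i. p i - snd f i) < fst f}"

definition eta :: "nat \<Rightarrow> point \<Rightarrow> point \<Rightarrow> real" where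
  "eta n u v = - (u 0 * v 0) + (\<Sum>i\<in>{1..<n}. u i * v i)"

definition causal_curve :: "nat \<Rightarrow> (real \<Rightarrow> point) \<Rightarrow> bool" where
  "causal_curve n \<gamma> \<longleftrightarrow>
     (\<forall>s\<in>{0..1}. \<forall>i\<ge>n. \<gamma> s i = 0) \<and>
     (\<exists>\<gamma>'. (\<forall>s\<in>{0..1}. \<forall>i<n.
                ((\<lambda>u. \<gamma> u i) has_vector_derivative \<gamma>' s i) (at s within {0..1})) \<and>
           (\<forall>s\<in>{0..1}. eta n (\<gamma>' s) (\<gamma>' s) \<le> 0) \<and>
           ((\<forall>s\<in>{0..1}. 0 \<le> \<gamma>' s 0) \<or> (\<forall>s\<in>{0..1}. \<gamma>' s 0 \<le> 0)))"

definition causally_disjoint :: "nat \<Rightarrow> point set \<Rightarrow> point set \<Rightarrow> bool" where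
  "causally_disjoint n S T \<longleftrightarrow> \<not> (\<exists>\<gamma>. causal_curve n \<gamma> \<and> \<gamma> 0 \<in> S \<and> \<gamma> 1 \<in> T)"

definition CD_perp :: "nat \<Rightarrow> emb \<Rightarrow> emb \<Rightarrow> bool" where
  "CD_perp n f g \<longleftrightarrow> causally_disjoint n (disc_img n f) (disc_img n g)"

definition Disc_perp :: "nat \<Rightarrow> emb \<Rightarrow> emb \<Rightarrow> bool" where
  "Disc_perp m f g \<longleftrightarrow> disc_int m f \<inter> disc_int m g = {}"

definition op_space :: "emb set \<Rightarrow> (emb \<Rightarrow> emb \<Rightarrow> bool) \<Rightarrow> nat \<Rightarrow> tup set" where
  "op_space H perp k = {fs. (\<forall>i<k. fs i \<in> H) \<and> (\<forall>i\<ge>k. fs i = eid) \<and>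
                            (\<forall>i<k. \<forall>j<k. i \<noteq> j \<longrightarrow> perp (fs i) (fs j))}"

(* topology of P(k): subspace of the product of copies of Hom (compact-open =
   topology of the parameters (r,b)) *)
definition op_top :: "emb set \<Rightarrow> (emb \<Rightarrow> emb \<Rightarrow> bool) \<Rightarrow> nat \<Rightarrow> tup topology" where
  "op_top H perp k = subtopology euclidean (op_space H perp k)"

(* partial composition  f o_i g  for f of arity k, g of arity j, i < k (0-based) *)
definition pcomp :: "nat \<Rightarrow> nat \<Rightarrow> tup \<Rightarrow> nat \<Rightarrow> tup \<Rightarrow> tup" where
  "pcomp k i f j g = (\<lambda>l. if l < i then f l
                         else if l < i + j then ecomp (f i) (g (l - i))
                         else if l < k + j - 1 then f (l + 1 - j)
                         else eid)"

definition sact :: "nat \<Rightarrow> (nat \<Rightarrow> nat) \<Rightarrow> tup \<Rightarrow> tup" where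
  "sact k \<sigma> f = (\<lambda>l. if l < k then f (\<sigma> l) else eid)"

definition operad_morphism ::
  "emb set \<Rightarrow> (emb \<Rightarrow> emb \<Rightarrow> bool) \<Rightarrow> emb set \<Rightarrow> (emb \<Rightarrow> emb \<Rightarrow> bool) \<Rightarrow> (nat \<Rightarrow> tup \<Rightarrow> tup) \<Rightarrow> bool" where
  "operad_morphism H1 p1 H2 p2 F \<longleftrightarrow>
     (\<forall>k. continuous_map (op_top H1 p1 k) (op_top H2 p2 k) (F k)) \<and>
     F 1 (\<lambda>_. eid) = (\<lambda>_. eid) \<and>
     (\<forall>k i j f g. i < k \<longrightarrow> f \<in> op_space H1 p1 k \<longrightarrow> g \<in> op_space H1 p1 j \<longrightarrow>
         F (k + j - 1) (pcomp k i f j g) = pcomp k i (F k f) j (F j g)) \<and>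
     (\<forall>k \<sigma> f. \<sigma> permutes {..<k} \<longrightarrow> f \<in> op_space H1 p1 k \<longrightarrow>
         F k (sact k \<sigma> f) = sact k \<sigma> (F k f))"

definition operad_hequiv_map ::
  "emb set \<Rightarrow> (emb \<Rightarrow> emb \<Rightarrow> bool) \<Rightarrow> emb set \<Rightarrow> (emb \<Rightarrow> emb \<Rightarrow> bool) \<Rightarrow> (nat \<Rightarrow> tup \<Rightarrow> tup) \<Rightarrow> bool" where
  "operad_hequiv_map H1 p1 H2 p2 F \<longleftrightarrow>
     operad_morphism H1 p1 H2 p2 F \<and>
     (\<forall>k. \<exists>G. continuous_map (op_top H2 p2 k) (op_top H1 p1 k) G \<and>
              homotopic_with (\<lambda>_. True) (op_top H1 p1 k) (op_top H1 p1 k) (G \<circ> F k) id \<and>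
              homotopic_with (\<lambda>_. True) (op_top H2 p2 k) (op_top H2 p2 k) (F k \<circ> G) id)"

definition operads_homotopy_equivalent ::
  "emb set \<Rightarrow> (emb \<Rightarrow> emb \<Rightarrow> bool) \<Rightarrow> emb set \<Rightarrow> (emb \<Rightarrow> emb \<Rightarrow> bool) \<Rightarrow> bool" where
  "operads_homotopy_equivalent H1 p1 H2 p2 \<longleftrightarrow>
     (\<exists>F. operad_hequiv_map H1 p1 H2 p2 F) \<or> (\<exists>F. operad_hequiv_map H2 p2 H1 p1 F)"

end

theory Submission
  imports Defs
begin

(*
  Along a causal curve, for every spatial vector d the function
  \<sigma> |d| t(s) - <d, x(s)> is nondecreasing, where \<sigma> = +-1 is the time orientation of
  the curve: its derivative is nonnegative by Cauchy-Schwarz and |x'| <= |t'|. Hence a causal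
  curve moves at most as far in space as in time, and as straight segments with this
  property are causal, two sets are causally disjoint iff all pairs of their points are
  spacelike separated.

  For discs this means that causally disjoint discs have centres at spatial distance
  > |\<Delta>t| + r1 + r2, so their spatial shadows are disjoint: forgetting the time coordinate,
  entrywise, is an operad morphism from P_CD_n to P_Disc_{n-1}. Conversely, disjoint spatial
  discs placed at time 0 with a quarter of their radius are causally disjoint. Both
  composites are homotopic to the identity through entrywise maps: shrinking the radii
  preserves both orthogonality relations, and moving the time coordinates of the centres
  linearly to 0 preserves causal disjointness of discs shrunk to a quarter.
*)

lemma eucl_norm_eq_L2_set: "eucl_norm m v = L2_set v {..<m}"
  unfolding eucl_norm_def L2_set_def by simp

lemma L2_set_subset_le: "finite B \<Longrightarrow> A \<subseteq> B \<Longrightarrow> L2_set f A \<le> L2_set f B"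
  unfolding L2_set_def by (intro real_sqrt_le_mono sum_mono2) auto

lemma abs_le_L2_set: "finite A \<Longrightarrow> i \<in> A \<Longrightarrow> \<bar>f i\<bar> \<le> L2_set f A"
  using member_le_L2_set[of A i "\<lambda>i. \<bar>f i\<bar>"] by (simp add: L2_set_def)

lemma L2_set_le_if_abs_le: "(\<And>i. i \<in> A \<Longrightarrow> \<bar>f i\<bar> \<le> \<bar>g i\<bar>) \<Longrightarrow> L2_set f A \<le> L2_set g A"
  using L2_set_mono[of A "\<lambda>i. \<bar>f i\<bar>" "\<lambda>i. \<bar>g i\<bar>"] by (simp add: L2_set_def)

lemma L2_set_diff_le: "L2_set (\<lambda>i. f i - g i) A \<le> L2_set f A + L2_set g A"
  using L2_set_triangle_ineq[of f "\<lambda>i. - g i" A] by (simp add: L2_set_def)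

lemma L2_set_commute_diff: "L2_set (\<lambda>i. f i - g i) A = L2_set (\<lambda>i. g i - f i) A"
  unfolding L2_set_def by (simp add: power2_commute)

lemma L2_set_shift: "L2_set (\<lambda>i. f (Suc i)) {..<m} = L2_set f {1..<Suc m}"
proof -
  have "{1..<Suc m} = Suc ` {..<m}"
    by (simp add: lessThan_atLeast0)
  then show ?thesis
    unfolding L2_set_def by (simp add: sum.reindex)
qed

lemma L2_set_lessThan_Suc: "L2_set f {..<Suc m} = sqrt ((f 0)\<^sup>2 + (L2_set f {1..<Suc m})\<^sup>2)"
proof -
  have "{..<Suc m} = insert 0 {1..<Suc m}" by auto
  then show ?thesis by simp
qed

lemma L2_set_case_nat_0: "L2_set (case_nat 0 f) {..<Suc m} = L2_set f {..<m}"
  unfolding L2_set_lessThan_Suc L2_set_shift[symmetric] by simp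

lemma scaled_le_if_nonneg: "0 < c \<Longrightarrow> c \<le> 1 \<Longrightarrow> 0 \<le> c * r \<Longrightarrow> c * (r::real) \<le> r"
  by (simp add: zero_le_mult_iff mult_left_le_one_le)

lemma spatial_le_time_if_eta_nonpos:
  assumes "eta n v v \<le> 0"
  shows "L2_set v {1..<n} \<le> \<bar>v 0\<bar>"
proof -
  have "(\<Sum>i\<in>{1..<n}. (v i)\<^sup>2) \<le> (v 0)\<^sup>2"
    using assms unfolding eta_def by (simp add: power2_eq_square)
  then show ?thesis
    unfolding L2_set_def using real_sqrt_le_mono by fastforce
qed

lemma sign_factor_if_constant_sign:
  assumes "(\<forall>s\<in>S. 0 \<le> v s) \<or> (\<forall>s\<in>S. v s \<le> (0::real))"
  obtains \<sigma> :: real where "\<bar>\<sigma>\<bar> = 1" "\<And>s. s \<in> S \<Longrightarrow> \<bar>v s\<bar> = \<sigma> * v s"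
proof (cases "\<forall>s\<in>S. 0 \<le> v s")
  case True
  then show ?thesis by (intro that[of 1]) auto
next
  case False
  then show ?thesis using assms by (intro that[of "-1"]) auto
qed

lemma inner_le_if_eta_nonpos:
  assumes "eta n v v \<le> 0"
  shows "(\<Sum>i\<in>{1..<n}. d i * v i) \<le> L2_set d {1..<n} * \<bar>v 0\<bar>"
proof -
  have "(\<Sum>i\<in>{1..<n}. d i * v i) \<le> (\<Sum>i\<in>{1..<n}. \<bar>d i\<bar> * \<bar>v i\<bar>)"
    by (intro sum_mono) (metis abs_ge_self abs_mult)
  also have "\<dots> \<le> L2_set d {1..<n} * L2_set v {1..<n}"
    by (rule L2_set_mult_ineq)
  also have "\<dots> \<le> L2_set d {1..<n} * \<bar>v 0\<bar>"
    using assms by (intro mult_left_mono spatial_le_time_if_eta_nonpos) auto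
  finally show ?thesis .
qed

lemma causal_curve_inner_le:
  assumes "causal_curve n \<gamma>"
  shows "(\<Sum>i\<in>{1..<n}. d i * (\<gamma> 1 i - \<gamma> 0 i)) \<le> L2_set d {1..<n} * \<bar>\<gamma> 1 0 - \<gamma> 0 0\<bar>"
proof (cases "n = 0")
  case True
  then show ?thesis by simp
next
  case False
  from assms obtain \<gamma>' where
    der: "\<forall>s\<in>{0..1}. \<forall>i<n. ((\<lambda>u. \<gamma> u i) has_vector_derivative \<gamma>' s i) (at s within {0..1})"
    and causal: "\<forall>s\<in>{0..1}. eta n (\<gamma>' s) (\<gamma>' s) \<le> 0"
    and oriented: "(\<forall>s\<in>{0..1}. 0 \<le> \<gamma>' s 0) \<or> (\<forall>s\<in>{0..1}. \<gamma>' s 0 \<le> 0)"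
    unfolding causal_curve_def by blast
  obtain \<sigma> :: real where "\<bar>\<sigma>\<bar> = 1" and \<sigma>: "\<And>s. s \<in> {0..1} \<Longrightarrow> \<bar>\<gamma>' s 0\<bar> = \<sigma> * \<gamma>' s 0"
    using sign_factor_if_constant_sign[OF oriented] by blast
  define N where "N = L2_set d {1..<n}"
  define \<psi> where "\<psi> s = \<sigma> * N * \<gamma> s 0 - (\<Sum>i\<in>{1..<n}. d i * \<gamma> s i)" for s
  define \<psi>' where "\<psi>' s = \<sigma> * N * \<gamma>' s 0 - (\<Sum>i\<in>{1..<n}. d i * \<gamma>' s i)" for s
  have \<psi>_deriv: "(\<psi> has_real_derivative \<psi>' s) (at s within {0..1})" if "s \<in> {0..1}" for s
    unfolding \<psi>_def[abs_def] \<psi>'_def using that False der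
    by (intro derivative_eq_intros) (auto simp: has_real_derivative_iff_has_vector_derivative)
  have \<psi>'_nonneg: "0 \<le> \<psi>' s" if "s \<in> {0..1}" for s
    using inner_le_if_eta_nonpos[of n "\<gamma>' s" d] causal that \<sigma>[OF that]
    unfolding \<psi>'_def N_def by (simp add: algebra_simps)
  have "\<psi> 0 \<le> \<psi> 1"
  proof (rule DERIV_nonneg_imp_increasing_open[of 0 1 \<psi>])
    show "continuous_on {0..1} \<psi>"
      using \<psi>_deriv by (meson DERIV_continuous continuous_on_eq_continuous_within)
    show "\<exists>y. (\<psi> has_real_derivative y) (at x) \<and> 0 \<le> y" if "0 < x" "x < 1" for x
      using \<psi>_deriv[of x] \<psi>'_nonneg[of x] at_within_Icc_at[of 0 x 1] that by auto
  qed simp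
  then have "(\<Sum>i\<in>{1..<n}. d i * (\<gamma> 1 i - \<gamma> 0 i)) \<le> N * (\<sigma> * (\<gamma> 1 0 - \<gamma> 0 0))"
    unfolding \<psi>_def by (simp add: algebra_simps sum_subtractf)
  also have "\<dots> \<le> N * \<bar>\<gamma> 1 0 - \<gamma> 0 0\<bar>"
    using \<open>\<bar>\<sigma>\<bar> = 1\<close> abs_ge_self[of "\<sigma> * (\<gamma> 1 0 - \<gamma> 0 0)"]
    by (intro mult_left_mono) (simp_all add: N_def abs_mult)
  finally show ?thesis unfolding N_def .
qed

lemma causal_curve_spatial_le_time:
  assumes "causal_curve n \<gamma>"
  shows "L2_set (\<lambda>i. \<gamma> 1 i - \<gamma> 0 i) {1..<n} \<le> \<bar>\<gamma> 1 0 - \<gamma> 0 0\<bar>"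
proof -
  define N where "N = L2_set (\<lambda>i. \<gamma> 1 i - \<gamma> 0 i) {1..<n}"
  have "N * N = (\<Sum>i\<in>{1..<n}. (\<gamma> 1 i - \<gamma> 0 i) * (\<gamma> 1 i - \<gamma> 0 i))"
    unfolding N_def L2_set_def by (simp add: sum_nonneg power2_eq_square[symmetric])
  also have "\<dots> \<le> N * \<bar>\<gamma> 1 0 - \<gamma> 0 0\<bar>"
    unfolding N_def by (rule causal_curve_inner_le[OF assms])
  finally have "N * N \<le> N * \<bar>\<gamma> 1 0 - \<gamma> 0 0\<bar>" .
  moreover have "0 \<le> N"
    unfolding N_def by simp
  ultimately show ?thesis
    unfolding N_def[symmetric] by (cases "N = 0") (simp_all add: mult_le_cancel_left_pos)
qed

lemma causal_curve_segment:
  assumes "\<forall>i\<ge>n. p i = 0" "\<forall>i\<ge>n. q i = 0"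
    and "L2_set (\<lambda>i. q i - p i) {1..<n} \<le> \<bar>q 0 - p 0\<bar>"
  shows "causal_curve n (\<lambda>s i. p i + s * (q i - p i))"
proof -
  have "eta n (\<lambda>i. q i - p i) (\<lambda>i. q i - p i) \<le> 0"
  proof -
    have "(\<Sum>i\<in>{1..<n}. (q i - p i)\<^sup>2) = (L2_set (\<lambda>i. q i - p i) {1..<n})\<^sup>2"
      unfolding L2_set_def by (simp add: sum_nonneg)
    also have "\<dots> \<le> (q 0 - p 0)\<^sup>2"
      using assms(3) by (metis L2_set_nonneg power2_abs power_mono)
    finally show ?thesis
      unfolding eta_def by (simp add: power2_eq_square)
  qed
  moreover have "((\<lambda>u. p i + u * (q i - p i)) has_vector_derivative q i - p i) (at s within {0..1})"
    for i and s :: real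
    unfolding has_real_derivative_iff_has_vector_derivative[symmetric]
    by (auto intro!: derivative_eq_intros)
  ultimately show ?thesis
    unfolding causal_curve_def using assms(1,2)
    by (intro conjI exI[of _ "\<lambda>_ i. q i - p i"]) auto
qed

lemma causally_disjoint_iff:
  assumes "\<forall>p\<in>A. \<forall>i\<ge>n. p i = 0" "\<forall>q\<in>B. \<forall>i\<ge>n. q i = 0"
  shows "causally_disjoint n A B \<longleftrightarrow>
    (\<forall>p\<in>A. \<forall>q\<in>B. \<bar>q 0 - p 0\<bar> < L2_set (\<lambda>i. q i - p i) {1..<n})"
proof
  assume "causally_disjoint n A B"
  show "\<forall>p\<in>A. \<forall>q\<in>B. \<bar>q 0 - p 0\<bar> < L2_set (\<lambda>i. q i - p i) {1..<n}"
  proof (intro ballI, rule ccontr)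
    fix p q
    assume "p \<in> A" "q \<in> B" and "\<not> \<bar>q 0 - p 0\<bar> < L2_set (\<lambda>i. q i - p i) {1..<n}"
    then have "causal_curve n (\<lambda>s i. p i + s * (q i - p i))"
      using assms by (intro causal_curve_segment) auto
    then show False
      using \<open>causally_disjoint n A B\<close> \<open>p \<in> A\<close> \<open>q \<in> B\<close>
      unfolding causally_disjoint_def by fastforce
  qed
next
  assume "\<forall>p\<in>A. \<forall>q\<in>B. \<bar>q 0 - p 0\<bar> < L2_set (\<lambda>i. q i - p i) {1..<n}"
  then show "causally_disjoint n A B"
    unfolding causally_disjoint_def using causal_curve_spatial_le_time by fastforce
qed

lemma mem_disc_img: "p \<in> disc_img n e \<longleftrightarrow> (\<forall>i\<ge>n. p i = 0) \<and> L2_set (\<lambda>i. p i - snd e i) {..<n} \<le> fst e"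
  unfolding disc_img_def eucl_norm_eq_L2_set by simp

lemma mem_disc_int: "p \<in> disc_int n e \<longleftrightarrow> (\<forall>i\<ge>n. p i = 0) \<and> L2_set (\<lambda>i. p i - snd e i) {..<n} < fst e"
  unfolding disc_int_def eucl_norm_eq_L2_set by simp

lemma time_shift_mem_disc_img:
  assumes "0 < n" "\<forall>i\<ge>n. c i = 0" "\<bar>a\<bar> \<le> r"
  shows "c(0 := c 0 + a) \<in> disc_img n (r, c)"
proof -
  obtain k where n: "n = Suc k" using assms(1) gr0_implies_Suc by blast
  have "L2_set (\<lambda>i. (c(0 := c 0 + a)) i - c i) {1..<n} = 0"
    by (intro L2_set_0') auto
  then show ?thesis
    using assms by (auto simp: mem_disc_img n L2_set_lessThan_Suc)
qed

lemma CD_perp_iff: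
  "CD_perp n e1 e2 \<longleftrightarrow>
    (\<forall>p\<in>disc_img n e1. \<forall>q\<in>disc_img n e2. \<bar>q 0 - p 0\<bar> < L2_set (\<lambda>i. q i - p i) {1..<n})"
  unfolding CD_perp_def by (rule causally_disjoint_iff) (auto simp: disc_img_def)

lemma CD_perp_imp_separation:
  assumes "0 < n" "CD_perp n (r1, c1) (r2, c2)" "0 \<le> r1" "0 \<le> r2"
    and "\<forall>i\<ge>n. c1 i = 0" "\<forall>i\<ge>n. c2 i = 0"
  shows "\<bar>c2 0 - c1 0\<bar> + r1 + r2 < L2_set (\<lambda>i. c2 i - c1 i) {1..<n}"
proof -
  \<comment> \<open>\<open>p\<close> and \<open>q\<close> are the points of the two discs furthest apart in time.\<close>
  define \<sigma> :: real where "\<sigma> = (if c1 0 \<le> c2 0 then 1 else -1)"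
  define p where "p = c1(0 := c1 0 - \<sigma> * r1)"
  define q where "q = c2(0 := c2 0 + \<sigma> * r2)"
  have "p \<in> disc_img n (r1, c1)"
    using time_shift_mem_disc_img[of n c1 "- \<sigma> * r1" r1] assms by (simp add: p_def \<sigma>_def)
  moreover have "q \<in> disc_img n (r2, c2)"
    using time_shift_mem_disc_img[of n c2 "\<sigma> * r2" r2] assms by (simp add: q_def \<sigma>_def)
  ultimately have "\<bar>q 0 - p 0\<bar> < L2_set (\<lambda>i. q i - p i) {1..<n}"
    using assms(2) CD_perp_iff by blast
  moreover have "L2_set (\<lambda>i. q i - p i) {1..<n} = L2_set (\<lambda>i. c2 i - c1 i) {1..<n}"
    by (rule L2_set_cong) (auto simp: p_def q_def)
  moreover have "\<bar>q 0 - p 0\<bar> = \<bar>c2 0 - c1 0\<bar> + r1 + r2"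
    using assms(3,4) by (simp add: p_def q_def \<sigma>_def algebra_simps)
  ultimately show ?thesis by simp
qed

lemma mem_disc_img_offset_le:
  assumes "0 < n" "p \<in> disc_img n (r, c)"
  shows "\<bar>p 0 - c 0\<bar> \<le> r" "L2_set (\<lambda>i. p i - c i) {1..<n} \<le> r"
proof -
  have L: "L2_set (\<lambda>i. p i - c i) {..<n} \<le> r"
    using assms(2) by (simp add: mem_disc_img)
  show "\<bar>p 0 - c 0\<bar> \<le> r"
    using order_trans[OF abs_le_L2_set[of "{..<n}" 0 "\<lambda>i. p i - c i"] L] assms(1) by simp
  show "L2_set (\<lambda>i. p i - c i) {1..<n} \<le> r"
    using order_trans[OF L2_set_subset_le[of "{..<n}" "{1..<n}" "\<lambda>i. p i - c i"] L]
    by (simp add: subset_eq)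
qed

lemma CD_perp_if_separation:
  assumes "0 < n" "\<bar>c2 0 - c1 0\<bar> + 2 * (r1 + r2) < L2_set (\<lambda>i. c2 i - c1 i) {1..<n}"
  shows "CD_perp n (r1, c1) (r2, c2)"
  unfolding CD_perp_iff
proof (intro ballI)
  fix p q
  assume p: "p \<in> disc_img n (r1, c1)" and q: "q \<in> disc_img n (r2, c2)"
  note offsets = mem_disc_img_offset_le[OF assms(1) p] mem_disc_img_offset_le[OF assms(1) q]
  have "L2_set (\<lambda>i. c2 i - c1 i) {1..<n}
      = L2_set (\<lambda>i. (q i - p i) - ((q i - c2 i) - (p i - c1 i))) {1..<n}"
    by (rule L2_set_cong) simp_all
  also have "\<dots> \<le> L2_set (\<lambda>i. q i - p i) {1..<n} + L2_set (\<lambda>i. (q i - c2 i) - (p i - c1 i)) {1..<n}"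
    by (rule L2_set_diff_le)
  also have "\<dots> \<le> L2_set (\<lambda>i. q i - p i) {1..<n} + (r1 + r2)"
    using L2_set_diff_le[of "\<lambda>i. q i - c2 i" "\<lambda>i. p i - c1 i" "{1..<n}"] offsets by simp
  finally have spatial: "L2_set (\<lambda>i. c2 i - c1 i) {1..<n} \<le> L2_set (\<lambda>i. q i - p i) {1..<n} + (r1 + r2)" .
  have "\<bar>q 0 - p 0\<bar> \<le> \<bar>c2 0 - c1 0\<bar> + (r1 + r2)"
    using offsets(1,3) unfolding abs_le_iff by (simp add: abs_if)
  also have "\<dots> < L2_set (\<lambda>i. c2 i - c1 i) {1..<n} - (r1 + r2)"
    using assms(2) by simp
  also have "\<dots> \<le> L2_set (\<lambda>i. q i - p i) {1..<n}"
    using spatial by simp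
  finally show "\<bar>q 0 - p 0\<bar> < L2_set (\<lambda>i. q i - p i) {1..<n}" .
qed

lemma segment_point_mem_disc_int:
  assumes "0 \<le> t" "t * L2_set (\<lambda>i. y i - x i) {..<m} < r" "\<forall>i\<ge>m. x i = 0" "\<forall>i\<ge>m. y i = 0"
  shows "(\<lambda>i. x i + t * (y i - x i)) \<in> disc_int m (r, x)"
  using assms by (simp add: mem_disc_int L2_set_right_distrib[OF assms(1)])

lemma Disc_perp_imp_dist_ge:
  assumes "Disc_perp m (r1, x1) (r2, x2)" "0 < r1" "0 < r2" "\<forall>i\<ge>m. x1 i = 0" "\<forall>i\<ge>m. x2 i = 0"
  shows "r1 + r2 \<le> L2_set (\<lambda>i. x2 i - x1 i) {..<m}"
proof (rule ccontr)
  define D where "D = L2_set (\<lambda>i. x2 i - x1 i) {..<m}"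
  assume "\<not> r1 + r2 \<le> L2_set (\<lambda>i. x2 i - x1 i) {..<m}"
  then have "D < r1 + r2"
    by (simp add: D_def)
  then have shrink: "r / (r1 + r2) * D < r" if "0 < r" for r
    using mult_strict_left_mono[OF \<open>D < r1 + r2\<close>, of "r / (r1 + r2)"] that assms(2,3) by simp
  \<comment> \<open>The point dividing the segment between the centres in the ratio \<open>r1 : r2\<close> lies in both discs.\<close>
  define w where "w = (\<lambda>i. x1 i + r1 / (r1 + r2) * (x2 i - x1 i))"
  have "w \<in> disc_int m (r1, x1)"
    unfolding w_def using assms shrink[of r1] by (intro segment_point_mem_disc_int) (simp_all add: D_def)
  moreover have "w = (\<lambda>i. x2 i + r2 / (r1 + r2) * (x1 i - x2 i))"
    using assms(2,3) by (simp add: w_def fun_eq_iff field_simps)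
  moreover have "(\<lambda>i. x2 i + r2 / (r1 + r2) * (x1 i - x2 i)) \<in> disc_int m (r2, x2)"
    using assms shrink[of r2] L2_set_commute_diff[of x1 x2]
    by (intro segment_point_mem_disc_int) (simp_all add: D_def)
  ultimately show False
    using assms(1) unfolding Disc_perp_def by blast
qed

lemma Disc_perp_if_dist_ge:
  assumes "r1 + r2 \<le> L2_set (\<lambda>i. x2 i - x1 i) {..<m}"
  shows "Disc_perp m (r1, x1) (r2, x2)"
  unfolding Disc_perp_def
proof (rule ccontr)
  assume "disc_int m (r1, x1) \<inter> disc_int m (r2, x2) \<noteq> {}"
  then obtain w where "L2_set (\<lambda>i. w i - x1 i) {..<m} < r1" "L2_set (\<lambda>i. w i - x2 i) {..<m} < r2"
    by (auto simp: mem_disc_int)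
  moreover have "L2_set (\<lambda>i. x2 i - x1 i) {..<m}
      \<le> L2_set (\<lambda>i. w i - x1 i) {..<m} + L2_set (\<lambda>i. w i - x2 i) {..<m}"
    using L2_set_diff_le[of "\<lambda>i. w i - x1 i" "\<lambda>i. w i - x2 i" "{..<m}"] by simp
  ultimately show False
    using assms by linarith
qed

definition scale_radius :: "real \<Rightarrow> emb \<Rightarrow> emb" where
  "scale_radius c e = (c * fst e, snd e)"

definition scale_time :: "real \<Rightarrow> emb \<Rightarrow> emb" where
  "scale_time s e = (fst e, (snd e)(0 := s * snd e 0))"

definition spatial_part :: "emb \<Rightarrow> emb" where
  "spatial_part e = (fst e, \<lambda>i. snd e (Suc i))"

definition spatial_embed :: "emb \<Rightarrow> emb" where
  "spatial_embed e = (fst e, case_nat 0 (snd e))"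

lemma scale_radius_1: "scale_radius 1 = id"
  by (simp add: scale_radius_def fun_eq_iff)

lemma scale_time_1: "scale_time 1 = id"
  by (simp add: scale_time_def fun_eq_iff)

lemma spatial_part_eid: "spatial_part eid = eid"
  by (simp add: spatial_part_def eid_def)

lemma spatial_part_ecomp: "spatial_part (ecomp f g) = ecomp (spatial_part f) (spatial_part g)"
  by (simp add: spatial_part_def ecomp_def)

lemma spatial_part_scale_radius: "spatial_part (scale_radius c e) = scale_radius c (spatial_part e)"
  by (simp add: spatial_part_def scale_radius_def)

lemma spatial_part_spatial_embed: "spatial_part (spatial_embed e) = e"
  by (simp add: spatial_part_def spatial_embed_def)

lemma spatial_embed_spatial_part: "spatial_embed (spatial_part e) = scale_time 0 e"
  by (auto simp: spatial_part_def spatial_embed_def scale_time_def fun_eq_iff split: nat.split)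

lemma disc_img_scale_radius_subset:
  assumes "0 < c" "c \<le> 1"
  shows "disc_img n (scale_radius c e) \<subseteq> disc_img n e"
proof
  fix p
  assume "p \<in> disc_img n (scale_radius c e)"
  then have "(\<forall>i\<ge>n. p i = 0)" and p: "L2_set (\<lambda>i. p i - snd e i) {..<n} \<le> c * fst e"
    by (simp_all add: mem_disc_img scale_radius_def)
  moreover have "c * fst e \<le> fst e"
    using assms order_trans[OF L2_set_nonneg p] by (rule scaled_le_if_nonneg)
  ultimately show "p \<in> disc_img n e"
    by (simp add: mem_disc_img)
qed

lemma disc_int_scale_radius_subset:
  assumes "0 < c" "c \<le> 1"
  shows "disc_int n (scale_radius c e) \<subseteq> disc_int n e"
proof
  fix p
  assume "p \<in> disc_int n (scale_radius c e)"
  then have "(\<forall>i\<ge>n. p i = 0)" and p: "L2_set (\<lambda>i. p i - snd e i) {..<n} < c * fst e"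
    by (simp_all add: mem_disc_int scale_radius_def)
  moreover have "c * fst e \<le> fst e"
    using assms order_trans[OF L2_set_nonneg less_imp_le[OF p]] by (rule scaled_le_if_nonneg)
  ultimately show "p \<in> disc_int n e"
    by (simp add: mem_disc_int)
qed

lemma CD_perp_scale_radius:
  "0 < c \<Longrightarrow> c \<le> 1 \<Longrightarrow> CD_perp n e1 e2 \<Longrightarrow> CD_perp n (scale_radius c e1) (scale_radius c e2)"
  unfolding CD_perp_def causally_disjoint_def using disc_img_scale_radius_subset by blast

lemma Disc_perp_scale_radius:
  "0 < c \<Longrightarrow> c \<le> 1 \<Longrightarrow> Disc_perp m e1 e2 \<Longrightarrow> Disc_perp m (scale_radius c e1) (scale_radius c e2)"
  unfolding Disc_perp_def using disc_int_scale_radius_subset by blast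

lemma mem_rect: "e \<in> rect m \<longleftrightarrow> 0 < fst e \<and> (\<forall>i\<ge>m. snd e i = 0) \<and> fst e + L2_set (snd e) {..<m} \<le> 1"
  unfolding rect_def eucl_norm_eq_L2_set by (cases e) simp

lemma scale_radius_in_rect:
  assumes "0 < c" "c \<le> 1" "e \<in> rect m"
  shows "scale_radius c e \<in> rect m"
proof -
  have "c * fst e \<le> fst e"
    using assms by (intro scaled_le_if_nonneg) (auto simp: mem_rect)
  then have "c * fst e + L2_set (snd e) {..<m} \<le> 1"
    using assms(3) unfolding mem_rect by linarith
  then show ?thesis
    using assms by (auto simp: mem_rect scale_radius_def)
qed

lemma scale_time_in_rect:
  assumes "\<bar>s\<bar> \<le> 1" "e \<in> rect m"
  shows "scale_time s e \<in> rect m"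
proof -
  have "L2_set ((snd e)(0 := s * snd e 0)) {..<m} \<le> L2_set (snd e) {..<m}"
    using assms(1) by (intro L2_set_le_if_abs_le) (simp add: abs_mult mult_left_le_one_le)
  then show ?thesis
    using assms(2) by (auto simp: mem_rect scale_time_def)
qed

lemma spatial_part_in_rect:
  assumes "e \<in> rect (Suc m)"
  shows "spatial_part e \<in> rect m"
proof -
  have "L2_set (snd e) {1..<Suc m} \<le> L2_set (snd e) {..<Suc m}"
    by (rule L2_set_subset_le) auto
  then show ?thesis
    using assms by (auto simp: mem_rect spatial_part_def L2_set_shift)
qed

lemma spatial_embed_in_rect: "e \<in> rect m \<Longrightarrow> spatial_embed e \<in> rect (Suc m)"
  by (auto simp: mem_rect spatial_embed_def L2_set_case_nat_0 split: nat.split)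

lemma continuous_on_snd_apply:
  assumes "continuous_on S f"
  shows "continuous_on S (\<lambda>x. snd (f x) i)"
  using continuous_on_snd[OF assms] by (rule continuous_on_product_then_coordinatewise)

lemma continuous_on_scale_radius: "continuous_on UNIV (scale_radius c)"
  unfolding scale_radius_def[abs_def] by (intro continuous_intros)

lemma continuous_on_scale_time: "continuous_on UNIV (\<lambda>p. scale_time (fst p) (snd p))"
proof -
  have "continuous_on UNIV (\<lambda>p::real \<times> emb. (snd (snd p))(0 := fst p * snd (snd p) 0))"
  proof (rule continuous_on_coordinatewise_then_product)
    show "continuous_on UNIV (\<lambda>p::real \<times> emb. ((snd (snd p))(0 := fst p * snd (snd p) 0)) i)" for i
      by (cases "i = 0")
        (simp_all add: continuous_on_mult continuous_on_fst continuous_on_snd continuous_on_snd_apply)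
  qed
  then show ?thesis
    unfolding scale_time_def by (intro continuous_on_Pair continuous_on_fst continuous_on_snd continuous_on_id)
qed

lemma continuous_on_spatial_part: "continuous_on UNIV spatial_part"
proof -
  have "continuous_on UNIV (\<lambda>e::emb. \<lambda>i. snd e (Suc i))"
    by (intro continuous_on_coordinatewise_then_product continuous_on_snd_apply continuous_on_id)
  then show ?thesis
    unfolding spatial_part_def[abs_def] by (intro continuous_on_Pair continuous_on_fst continuous_on_id)
qed

lemma continuous_on_spatial_embed: "continuous_on UNIV spatial_embed"
proof -
  have "continuous_on UNIV (\<lambda>e::emb. case_nat 0 (snd e))"
  proof (rule continuous_on_coordinatewise_then_product)
    show "continuous_on UNIV (\<lambda>e::emb. case_nat 0 (snd e) i)" for i
      by (cases i) (simp_all add: continuous_on_snd_apply)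
  qed
  then show ?thesis
    unfolding spatial_embed_def[abs_def] by (intro continuous_on_Pair continuous_on_fst continuous_on_id)
qed

definition orth_map ::
  "emb set \<Rightarrow> (emb \<Rightarrow> emb \<Rightarrow> bool) \<Rightarrow> emb set \<Rightarrow> (emb \<Rightarrow> emb \<Rightarrow> bool) \<Rightarrow> (emb \<Rightarrow> emb) \<Rightarrow> bool" where
  "orth_map H1 p1 H2 p2 T \<longleftrightarrow>
     (\<forall>e\<in>H1. T e \<in> H2) \<and> (\<forall>e1\<in>H1. \<forall>e2\<in>H1. p1 e1 e2 \<longrightarrow> p2 (T e1) (T e2))"

lemma orth_map_spatial_part: "orth_map (rect (Suc m)) (CD_perp (Suc m)) (rect m) (Disc_perp m) spatial_part"
  unfolding orth_map_def
proof (intro conjI ballI impI)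
  show "spatial_part e \<in> rect m" if "e \<in> rect (Suc m)" for e
    using that by (rule spatial_part_in_rect)
next
  fix e1 e2
  assume e: "e1 \<in> rect (Suc m)" "e2 \<in> rect (Suc m)" and "CD_perp (Suc m) e1 e2"
  obtain r1 c1 r2 c2 where e12: "e1 = (r1, c1)" "e2 = (r2, c2)" by fastforce
  have "\<bar>c2 0 - c1 0\<bar> + r1 + r2 < L2_set (\<lambda>i. c2 i - c1 i) {1..<Suc m}"
    using e \<open>CD_perp (Suc m) e1 e2\<close> by (intro CD_perp_imp_separation) (auto simp: e12 mem_rect)
  then have "r1 + r2 \<le> L2_set (\<lambda>i. c2 (Suc i) - c1 (Suc i)) {..<m}"
    unfolding L2_set_shift[of "\<lambda>i. c2 i - c1 i"] by simp
  then show "Disc_perp m (spatial_part e1) (spatial_part e2)"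
    by (simp add: e12 spatial_part_def Disc_perp_if_dist_ge)
qed

lemma orth_map_quarter_spatial_embed:
  "orth_map (rect m) (Disc_perp m) (rect (Suc m)) (CD_perp (Suc m)) (scale_radius (1/4) \<circ> spatial_embed)"
  unfolding orth_map_def
proof (intro conjI ballI impI)
  show "(scale_radius (1/4) \<circ> spatial_embed) e \<in> rect (Suc m)" if "e \<in> rect m" for e
    unfolding comp_apply using that by (intro scale_radius_in_rect spatial_embed_in_rect) auto
next
  fix e1 e2
  assume e: "e1 \<in> rect m" "e2 \<in> rect m" and "Disc_perp m e1 e2"
  obtain r1 x1 r2 x2 where e12: "e1 = (r1, x1)" "e2 = (r2, x2)" by fastforce
  have r: "0 < r1" "0 < r2"
    using e by (auto simp: e12 mem_rect)
  have "r1 + r2 \<le> L2_set (\<lambda>i. x2 i - x1 i) {..<m}"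
    using e \<open>Disc_perp m e1 e2\<close> by (intro Disc_perp_imp_dist_ge) (auto simp: e12 mem_rect)
  also have "\<dots> = L2_set (\<lambda>i. case_nat 0 x2 i - case_nat 0 x1 i) {1..<Suc m}"
    unfolding L2_set_shift[symmetric] by simp
  finally have "\<bar>case_nat 0 x2 0 - case_nat 0 x1 0\<bar> + 2 * (r1 / 4 + r2 / 4)
      < L2_set (\<lambda>i. case_nat 0 x2 i - case_nat 0 x1 i) {1..<Suc m}"
    using r by simp
  then show "CD_perp (Suc m) ((scale_radius (1/4) \<circ> spatial_embed) e1) ((scale_radius (1/4) \<circ> spatial_embed) e2)"
    by (auto simp: e12 spatial_embed_def scale_radius_def intro: CD_perp_if_separation)
qed

lemma orth_map_quarter_scale_time:
  assumes "0 < n" "s \<in> {0..1}"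
  shows "orth_map (rect n) (CD_perp n) (rect n) (CD_perp n) (scale_radius (1/4) \<circ> scale_time s)"
  unfolding orth_map_def
proof (intro conjI ballI impI)
  show "(scale_radius (1/4) \<circ> scale_time s) e \<in> rect n" if "e \<in> rect n" for e
    unfolding comp_apply using that assms(2) by (intro scale_radius_in_rect scale_time_in_rect) auto
next
  fix e1 e2
  assume e: "e1 \<in> rect n" "e2 \<in> rect n" and "CD_perp n e1 e2"
  obtain r1 c1 r2 c2 where e12: "e1 = (r1, c1)" "e2 = (r2, c2)" by fastforce
  have r: "0 < r1" "0 < r2"
    using e by (auto simp: e12 mem_rect)
  let ?c1 = "c1(0 := s * c1 0)" and ?c2 = "c2(0 := s * c2 0)"
  have "\<bar>?c2 0 - ?c1 0\<bar> \<le> \<bar>c2 0 - c1 0\<bar>"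
    using assms(2) by (simp add: right_diff_distrib[symmetric] abs_mult mult_left_le_one_le)
  moreover have "L2_set (\<lambda>i. ?c2 i - ?c1 i) {1..<n} = L2_set (\<lambda>i. c2 i - c1 i) {1..<n}"
    by (rule L2_set_cong) auto
  moreover have "\<bar>c2 0 - c1 0\<bar> + r1 + r2 < L2_set (\<lambda>i. c2 i - c1 i) {1..<n}"
    using assms(1) e \<open>CD_perp n e1 e2\<close> by (intro CD_perp_imp_separation) (auto simp: e12 mem_rect)
  ultimately have "\<bar>?c2 0 - ?c1 0\<bar> + 2 * (r1 / 4 + r2 / 4) < L2_set (\<lambda>i. ?c2 i - ?c1 i) {1..<n}"
    using r by simp
  then show "CD_perp n ((scale_radius (1/4) \<circ> scale_time s) e1) ((scale_radius (1/4) \<circ> scale_time s) e2)"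
    using assms(1) by (auto simp: e12 scale_time_def scale_radius_def intro: CD_perp_if_separation)
qed

definition tup_map :: "nat \<Rightarrow> (emb \<Rightarrow> emb) \<Rightarrow> tup \<Rightarrow> tup" where
  "tup_map k T fs = (\<lambda>l. if l < k then T (fs l) else eid)"

lemma tup_map_comp: "tup_map k S \<circ> tup_map k T = tup_map k (S \<circ> T)"
  by (auto simp: tup_map_def fun_eq_iff)

lemma tup_map_id: "fs \<in> op_space H p k \<Longrightarrow> tup_map k id fs = fs"
  by (auto simp: tup_map_def op_space_def fun_eq_iff)

lemma tup_map_in_op_space:
  "orth_map H1 p1 H2 p2 T \<Longrightarrow> fs \<in> op_space H1 p1 k \<Longrightarrow> tup_map k T fs \<in> op_space H2 p2 k"
  by (auto simp: orth_map_def op_space_def tup_map_def)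

lemma continuous_on_tup_map:
  assumes "continuous_on UNIV T"
  shows "continuous_on UNIV (tup_map k T)"
  unfolding tup_map_def
proof (intro continuous_on_coordinatewise_then_product)
  show "continuous_on UNIV (\<lambda>fs. if l < k then T (fs l) else eid)" for l
    using continuous_on_compose2[OF assms continuous_on_product_coordinates] by (cases "l < k") auto
qed

lemma continuous_on_tup_map_family:
  assumes "continuous_on UNIV (\<lambda>p. T (fst p) (snd p))"
  shows "continuous_on UNIV (\<lambda>p. tup_map k (T (fst p)) (snd p))"
  unfolding tup_map_def
proof (intro continuous_on_coordinatewise_then_product)
  fix l :: nat
  have "continuous_on UNIV (\<lambda>p. (fst p, snd p l))"
    by (intro continuous_intros continuous_on_snd_apply)
  then have "continuous_on UNIV ((\<lambda>q. T (fst q) (snd q)) \<circ> (\<lambda>p. (fst p, snd p l)))"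
    using assms continuous_on_compose continuous_on_subset by blast
  then have "continuous_on UNIV (\<lambda>p. T (fst p) (snd p l))"
    by (simp add: o_def)
  then show "continuous_on UNIV (\<lambda>p. if l < k then T (fst p) (snd p l) else eid)"
    by (cases "l < k") simp_all
qed

lemma continuous_map_tup_map:
  assumes "continuous_on UNIV T" "orth_map H1 p1 H2 p2 T"
  shows "continuous_map (op_top H1 p1 k) (op_top H2 p2 k) (tup_map k T)"
proof -
  have "continuous_on (op_space H1 p1 k) (tup_map k T)"
    using continuous_on_tup_map[OF assms(1)] by (rule continuous_on_subset) simp
  moreover have "tup_map k T \<in> op_space H1 p1 k \<rightarrow> op_space H2 p2 k"
    using tup_map_in_op_space[OF assms(2)] by blast
  ultimately show ?thesis
    unfolding op_top_def by simp
qed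

lemma homotopic_tup_map:
  fixes T :: "real \<Rightarrow> emb \<Rightarrow> emb"
  assumes "continuous_on UNIV (\<lambda>p. T (fst p) (snd p))"
    and "\<And>t. t \<in> {0..1} \<Longrightarrow> orth_map H p H p (T t)"
  shows "homotopic_with (\<lambda>_. True) (op_top H p k) (op_top H p k) (tup_map k (T 0)) (tup_map k (T 1))"
proof -
  let ?h = "\<lambda>x. tup_map k (T (fst x)) (snd x)"
  have "continuous_on ({0..1} \<times> op_space H p k) ?h"
    using continuous_on_subset[OF continuous_on_tup_map_family[OF assms(1)]] by blast
  moreover have "?h \<in> {0..1} \<times> op_space H p k \<rightarrow> op_space H p k"
    using assms(2) by (auto intro!: tup_map_in_op_space)
  ultimately have "continuous_map (prod_topology (top_of_set {0..1}) (op_top H p k)) (op_top H p k) ?h"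
    unfolding op_top_def by simp
  then show ?thesis
    unfolding homotopic_with_def by (intro exI[of _ ?h]) auto
qed

lemma homotopic_tup_map_scale_radius_id:
  assumes "0 < c" "c \<le> 1"
    and perp: "\<And>c e1 e2. 0 < c \<Longrightarrow> c \<le> 1 \<Longrightarrow> p e1 e2 \<Longrightarrow> p (scale_radius c e1) (scale_radius c e2)"
  shows "homotopic_with (\<lambda>_. True) (op_top (rect m) p k) (op_top (rect m) p k) (tup_map k (scale_radius c)) id"
proof -
  let ?T = "\<lambda>t. scale_radius (c + t * (1 - c))"
  have "homotopic_with (\<lambda>_. True) (op_top (rect m) p k) (op_top (rect m) p k) (tup_map k (?T 0)) (tup_map k (?T 1))"
  proof (rule homotopic_tup_map)
    show "continuous_on UNIV (\<lambda>q. ?T (fst q) (snd q))"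
      unfolding scale_radius_def by (intro continuous_intros)
    show "orth_map (rect m) p (rect m) p (?T t)" if "t \<in> {0..1}" for t
    proof -
      have "0 \<le> t * (1 - c)" "t * (1 - c) \<le> 1 - c"
        using assms(2) that by (auto intro: mult_left_le_one_le)
      then have "0 < c + t * (1 - c)" "c + t * (1 - c) \<le> 1"
        using assms(1) by linarith+
      then show ?thesis
        unfolding orth_map_def by (auto intro: scale_radius_in_rect perp)
    qed
  qed
  then show ?thesis
    by (rule homotopic_with_eq) (auto simp: op_top_def scale_radius_1 tup_map_id)
qed

lemma operad_morphism_tup_map:
  assumes "continuous_on UNIV T" "orth_map H1 p1 H2 p2 T"
    and "T eid = eid" "\<And>f g. T (ecomp f g) = ecomp (T f) (T g)"
  shows "operad_morphism H1 p1 H2 p2 (\<lambda>k. tup_map k T)"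
  unfolding operad_morphism_def
proof (intro conjI allI impI)
  show "continuous_map (op_top H1 p1 k) (op_top H2 p2 k) (tup_map k T)" for k
    using assms(1,2) by (rule continuous_map_tup_map)
  show "tup_map 1 T (\<lambda>_. eid) = (\<lambda>_. eid)"
    using assms(3) by (simp add: tup_map_def fun_eq_iff)
  show "tup_map (k + j - 1) T (pcomp k i f j g) = pcomp k i (tup_map k T f) j (tup_map j T g)"
    if "i < k" for k i j f g
    using that assms(4) by (auto simp: tup_map_def pcomp_def fun_eq_iff)
  show "tup_map k T (sact k \<sigma> f) = sact k \<sigma> (tup_map k T f)" if "\<sigma> permutes {..<k}" for k \<sigma> f
    using permutes_in_image[OF that] by (auto simp: tup_map_def sact_def fun_eq_iff)
qed

lemma operad_morphism_spatial_part:
  "operad_morphism (rect (Suc m)) (CD_perp (Suc m)) (rect m) (Disc_perp m) (\<lambda>k. tup_map k spatial_part)"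
  using continuous_on_spatial_part orth_map_spatial_part spatial_part_eid spatial_part_ecomp
  by (rule operad_morphism_tup_map)

lemma continuous_map_quarter_spatial_embed:
  "continuous_map (op_top (rect m) (Disc_perp m) k) (op_top (rect (Suc m)) (CD_perp (Suc m)) k)
    (tup_map k (scale_radius (1/4) \<circ> spatial_embed))"
  using continuous_on_compose[OF continuous_on_spatial_embed continuous_on_subset[OF continuous_on_scale_radius]]
    orth_map_quarter_spatial_embed
  by (intro continuous_map_tup_map) auto

lemma homotopic_quarter_spatial_embed_spatial_part_id:
  "homotopic_with (\<lambda>_. True) (op_top (rect (Suc m)) (CD_perp (Suc m)) k) (op_top (rect (Suc m)) (CD_perp (Suc m)) k)
    (tup_map k (scale_radius (1/4) \<circ> spatial_embed) \<circ> tup_map k spatial_part) id"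
proof -
  let ?X = "op_top (rect (Suc m)) (CD_perp (Suc m)) k"
  have "tup_map k (scale_radius (1/4) \<circ> spatial_embed) \<circ> tup_map k spatial_part
      = tup_map k (scale_radius (1/4) \<circ> scale_time 0)"
    unfolding tup_map_comp by (simp add: comp_def spatial_embed_spatial_part)
  moreover have "homotopic_with (\<lambda>_. True) ?X ?X
      (tup_map k (scale_radius (1/4) \<circ> scale_time 0)) (tup_map k (scale_radius (1/4)))"
    using homotopic_tup_map[of "\<lambda>t. scale_radius (1/4) \<circ> scale_time t" "rect (Suc m)" "CD_perp (Suc m)" k]
      continuous_on_compose[OF continuous_on_scale_time continuous_on_subset[OF continuous_on_scale_radius]]
      orth_map_quarter_scale_time
    by (simp add: scale_time_1 comp_def)
  moreover have "homotopic_with (\<lambda>_. True) ?X ?X (tup_map k (scale_radius (1/4))) id"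
    using CD_perp_scale_radius by (intro homotopic_tup_map_scale_radius_id) auto
  ultimately show ?thesis
    by (simp only:) (rule homotopic_with_trans)
qed

lemma homotopic_spatial_part_quarter_spatial_embed_id:
  "homotopic_with (\<lambda>_. True) (op_top (rect m) (Disc_perp m) k) (op_top (rect m) (Disc_perp m) k)
    (tup_map k spatial_part \<circ> tup_map k (scale_radius (1/4) \<circ> spatial_embed)) id"
proof -
  have "tup_map k spatial_part \<circ> tup_map k (scale_radius (1/4) \<circ> spatial_embed) = tup_map k (scale_radius (1/4))"
    unfolding tup_map_comp by (simp add: comp_def spatial_part_scale_radius spatial_part_spatial_embed)
  moreover have "homotopic_with (\<lambda>_. True) (op_top (rect m) (Disc_perp m) k) (op_top (rect m) (Disc_perp m) k)
      (tup_map k (scale_radius (1/4))) id"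
    using Disc_perp_scale_radius by (intro homotopic_tup_map_scale_radius_id) auto
  ultimately show ?thesis
    by simp
qed

theorem mainTheorem6:
  fixes n :: nat
  assumes "2 \<le> n"
  shows "operads_homotopy_equivalent (rect n) (CD_perp n) (rect (n - 1)) (Disc_perp (n - 1))"
proof -
  obtain m where n: "n = Suc m"
    using assms by (cases n) auto
  have "operad_hequiv_map (rect (Suc m)) (CD_perp (Suc m)) (rect m) (Disc_perp m) (\<lambda>k. tup_map k spatial_part)"
    unfolding operad_hequiv_map_def
  proof (intro conjI allI operad_morphism_spatial_part)
    show "\<exists>G. continuous_map (op_top (rect m) (Disc_perp m) k) (op_top (rect (Suc m)) (CD_perp (Suc m)) k) G \<and>
        homotopic_with (\<lambda>_. True) (op_top (rect (Suc m)) (CD_perp (Suc m)) k)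
          (op_top (rect (Suc m)) (CD_perp (Suc m)) k) (G \<circ> tup_map k spatial_part) id \<and>
        homotopic_with (\<lambda>_. True) (op_top (rect m) (Disc_perp m) k) (op_top (rect m) (Disc_perp m) k)
          (tup_map k spatial_part \<circ> G) id" for k
      by (intro exI[of _ "tup_map k (scale_radius (1/4) \<circ> spatial_embed)"] conjI
          continuous_map_quarter_spatial_embed homotopic_quarter_spatial_embed_spatial_part_id
          homotopic_spatial_part_quarter_spatial_embed_id)
  qed
  then show ?thesis
    unfolding operads_homotopy_equivalent_def n by auto
qed

end
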